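(* Consider the mining game with $N\ge 2$ miners, costs-per-hash $0<c_1\le\dots\le c_N$, reward $R>0$ and capacity parameter $\gamma\ge0$, let $h^*$ be its unique equilibrium hash rate profile, $n$ the number of active miners, and $\pi_i^*$ the equilibrium payoff of miner $i$. Then $(\pi_i^* )_{1\le i\le N}$ is a decreasing sequence with $\pi_i^*>0$ for $1\le i\le n$ and $\pi_i^*=0$ for $n<i\le N$. Moreover, the profit-per-hash of active miners, $(\pi_i^*/h_i^* )_{1\le i\le n}$, is a decreasing sequence.
   Context: Mining game: $N\ge2$ miners with costs-per-hash $0<c_1\le\dots\le c_N$; each miner $i$ chooses $h_i\ge0$, $H=\sum_j h_j$, and the payoff of miner $i$ is $\pi_i=\frac{h_i}{H}R-c_ih_i-\frac{\gamma}{2}h_i^2$ if $H>0$, and $\pi_i=0$ if $H=0$, where $R>0$ and $\gamma\ge 0$. An equilibrium hash rate profile is a pure-strategy Nash equilibrium $h^*\in[0,\infty)^N$; it exists and is unique, and $\pi_i^*$ denotes miner $i$'s payoff at $h^*$. Miner $i$ is active if $h_i^*>0$. A sequence $(x_i)$ is called decreasing if $x_i\ge x_{i+1}$ for all $i$. *)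

theory Defs
  imports Main "HOL.Real"
begin

text \<open>Miners are indexed by 1..N; a hash rate profile is h :: nat => real
  (only the values on 1..N matter). Total hash rate H = sum of h over 1..N.\<close>

definition total_hash :: "nat \<Rightarrow> (nat \<Rightarrow> real) \<Rightarrow> real" where
  "total_hash N h = (\<Sum>j\<in>{1..N}. h j)"

definition payoff :: "real \<Rightarrow> real \<Rightarrow> (nat \<Rightarrow> real) \<Rightarrow> nat \<Rightarrow> (nat \<Rightarrow> real) \<Rightarrow> nat \<Rightarrow> real" where
  "payoff R \<gamma> c N h i =
     (if total_hash N h > 0
      then h i / total_hash N h * R - c i * h i - \<gamma> / 2 * (h i)^2
      else 0)"

definition is_equilibrium :: "real \<Rightarrow> real \<Rightarrow> (nat \<Rightarrow> real) \<Rightarrow> nat \<Rightarrow> (nat \<Rightarrow> real) \<Rightarrow> bool" where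
  "is_equilibrium R \<gamma> c N h \<longleftrightarrow>
     (\<forall>i\<in>{1..N}. 0 \<le> h i) \<and>
     (\<forall>i\<in>{1..N}. \<forall>x::real. 0 \<le> x \<longrightarrow> payoff R \<gamma> c N (h(i := x)) i \<le> payoff R \<gamma> c N h i)"

definition num_active :: "nat \<Rightarrow> (nat \<Rightarrow> real) \<Rightarrow> nat" where
  "num_active N h = card {i\<in>{1..N}. 0 < h i}"

end

theory Submission
  imports Defs Complex_Main
begin

text \<open>With H the total hash rate, the first-order conditions of a miner's best response read
  h_i (\<gamma> + R/H^2) = R/H - c_i for active miners and R/H \<le> c_i for inactive ones. Hence h_i is
  antitone in the cost c_i, and substituting the condition into the payoff gives
  \<pi>_i = (\<gamma>/2 + R/H^2) h_i^2, so payoffs and profits per hash inherit the monotonicity of h.\<close>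

text \<open>S is the total hash rate of the other miners.\<close>
definition miner_payoff :: "real \<Rightarrow> real \<Rightarrow> real \<Rightarrow> real \<Rightarrow> real \<Rightarrow> real" where
  "miner_payoff R \<gamma> c S x = (if S + x > 0 then x / (S + x) * R - c * x - \<gamma> / 2 * x^2 else 0)"

lemma total_hash_fun_upd:
  assumes "i \<in> {1..N}"
  shows "total_hash N (h(i := x)) = total_hash N h - h i + x"
proof -
  have "(\<Sum>j\<in>{1..N} - {i}. (h(i := x)) j) = (\<Sum>j\<in>{1..N} - {i}. h j)"
    by (rule sum.cong) auto
  then have "total_hash N (h(i := x)) = x + (\<Sum>j\<in>{1..N} - {i}. h j)"
    unfolding total_hash_def using assms by (simp add: sum.remove)
  moreover have "total_hash N h = h i + (\<Sum>j\<in>{1..N} - {i}. h j)"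
    unfolding total_hash_def using assms by (simp add: sum.remove)
  ultimately show ?thesis by simp
qed

lemma payoff_fun_upd:
  assumes "i \<in> {1..N}"
  shows "payoff R \<gamma> c N (h(i := x)) i = miner_payoff R \<gamma> (c i) (total_hash N h - h i) x"
  using assms by (simp add: payoff_def miner_payoff_def total_hash_fun_upd)

lemma payoff_eq_miner_payoff:
  assumes "i \<in> {1..N}"
  shows "payoff R \<gamma> c N h i = miner_payoff R \<gamma> (c i) (total_hash N h - h i) (h i)"
  using payoff_fun_upd[OF assms, of R \<gamma> c h "h i"] by simp

lemma payoff_formula_has_real_derivative:
  assumes "0 < S + x"
  shows "((\<lambda>x. x / (S + x) * R - c * x - \<gamma> / 2 * x^2) has_real_derivative
           R * S / (S + x)^2 - c - \<gamma> * x) (at x)"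
proof -
  from assms have "S + x \<noteq> 0" by simp
  then show ?thesis
    by (auto intro!: derivative_eq_intros) (simp add: field_simps power2_eq_square)
qed

context
  fixes R \<gamma> c S y :: real
  assumes R_pos: "0 < R" and c_pos: "0 < c" and \<gamma>_nonneg: "0 \<le> \<gamma>"
    and y_nonneg: "0 \<le> y"
    and y_max: "\<And>x. 0 \<le> x \<Longrightarrow> miner_payoff R \<gamma> c S x \<le> miner_payoff R \<gamma> c S y"
begin

text \<open>With nobody else mining, any positive hash rate wins the whole reward, so the best
  response would be an arbitrarily small positive hash rate, which does not exist.\<close>
lemma best_response_others_pos:
  assumes "0 \<le> S"
  shows "0 < S"
proof (rule ccontr)
  assume "\<not> 0 < S"
  with assms have S: "S = 0" by simp
  show False
  proof (cases "y = 0")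
    case True
    define x where "x = R / (c + \<gamma> + R)"
    have x_pos: "0 < x" and "x < 1" and x_eq: "x * (c + \<gamma> + R) = R"
      using R_pos c_pos \<gamma>_nonneg by (auto simp: x_def field_simps)
    then have "\<gamma> * x^2 \<le> \<gamma> * x"
      using \<gamma>_nonneg by (intro mult_left_mono) (auto simp: power2_eq_square)
    moreover have "0 < R * x" "0 \<le> \<gamma> * x"
      using x_pos R_pos \<gamma>_nonneg by simp_all
    ultimately have "c * x + \<gamma> / 2 * x^2 < R"
      using x_eq by (simp add: algebra_simps)
    then have "miner_payoff R \<gamma> c S y < miner_payoff R \<gamma> c S x"
      using True S x_pos by (simp add: miner_payoff_def)
    with y_max[of x] x_pos show False by simp
  next
    case False
    with y_nonneg have "0 < y" by simp
    then have "miner_payoff R \<gamma> c S y < miner_payoff R \<gamma> c S (y / 2)"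
      using S c_pos \<gamma>_nonneg by (simp add: miner_payoff_def power2_eq_square field_simps
          add_pos_nonneg)
    with y_max[of "y / 2"] \<open>0 < y\<close> show False by simp
  qed
qed

context
  assumes S_pos: "0 < S"
begin

private lemma payoff_formula_le:
  assumes "0 \<le> x"
  shows "x / (S + x) * R - c * x - \<gamma> / 2 * x^2 \<le> y / (S + y) * R - c * y - \<gamma> / 2 * y^2"
  using y_max[OF assms] S_pos assms y_nonneg by (simp add: miner_payoff_def)

lemma best_response_interior:
  assumes "0 < y"
  shows "y * (\<gamma> + R / (S + y)^2) = R / (S + y) - c"
proof -
  have "R * S / (S + y)^2 - c - \<gamma> * y = 0"
    by (rule DERIV_local_max[OF payoff_formula_has_real_derivative assms])
      (use S_pos assms payoff_formula_le in auto)
  moreover have "R * S / (S + y)^2 = R / (S + y) - y * (R / (S + y)^2)"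
    using S_pos assms by (simp add: power2_eq_square divide_simps) (simp add: algebra_simps)
  ultimately show ?thesis
    by (simp add: algebra_simps)
qed

lemma best_response_corner:
  assumes "y = 0"
  shows "R / S \<le> c"
proof (rule ccontr)
  assume "\<not> R / S \<le> c"
  then have "0 < R * S / (S + 0)^2 - c - \<gamma> * 0"
    using S_pos by (simp add: power2_eq_square)
  from DERIV_pos_inc_right[OF payoff_formula_has_real_derivative this]
  obtain d where "0 < d"
    and increase: "\<And>x. 0 < x \<Longrightarrow> x < d \<Longrightarrow> 0 < x / (S + x) * R - c * x - \<gamma> / 2 * x^2"
    using S_pos by auto
  then have "0 < d / 2 / (S + d / 2) * R - c * (d / 2) - \<gamma> / 2 * (d / 2)^2"
    by (intro increase) simp_all
  with payoff_formula_le[of "d / 2"] \<open>0 < d\<close> assms show False by simp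
qed

end

end

lemma positive_set_eq_initial_segment:
  fixes f :: "nat \<Rightarrow> 'a::{linorder,zero}"
  assumes antitone: "\<And>i j. 1 \<le> i \<Longrightarrow> i \<le> j \<Longrightarrow> j \<le> N \<Longrightarrow> f j \<le> f i"
  shows "{i\<in>{1..N}. 0 < f i} = {1..card {i\<in>{1..N}. 0 < f i}}"
    (is "?P = {1..card ?P}")
proof (intro equalityI subsetI)
  fix i assume "i \<in> ?P"
  then have "{1..i} \<subseteq> ?P"
    using antitone by (auto intro: order.strict_trans2)
  then have "i \<le> card ?P"
    using card_mono[of ?P "{1..i}"] by simp
  with \<open>i \<in> ?P\<close> show "i \<in> {1..card ?P}" by simp
next
  fix i assume i: "i \<in> {1..card ?P}"
  have "card ?P \<le> N"
    by (rule order_trans[OF card_mono[of "{1..N}"]]) auto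
  show "i \<in> ?P"
  proof (rule ccontr)
    assume "i \<notin> ?P"
    have "j < i" if "j \<in> ?P" for j
    proof (rule ccontr)
      assume "\<not> j < i"
      with that i antitone[of i j] have "0 < f i"
        by (auto intro: order.strict_trans2)
      with i \<open>card ?P \<le> N\<close> \<open>i \<notin> ?P\<close> show False by auto
    qed
    then have "?P \<subseteq> {1..<i}" by auto
    then have "card ?P \<le> card {1..<i}"
      by (intro card_mono) auto
    with i show False by auto
  qed
qed

locale mining_equilibrium =
  fixes N :: nat and c :: "nat \<Rightarrow> real" and R \<gamma> :: real and h :: "nat \<Rightarrow> real"
  assumes miners_exist: "0 < N"
    and cost_pos: "\<And>i. i \<in> {1..N} \<Longrightarrow> 0 < c i"
    and reward_pos: "0 < R"
    and gamma_nonneg: "0 \<le> \<gamma>"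
    and equilibrium: "is_equilibrium R \<gamma> c N h"
begin

lemma hash_nonneg: "i \<in> {1..N} \<Longrightarrow> 0 \<le> h i"
  using equilibrium by (simp add: is_equilibrium_def)

lemma best_response:
  assumes "i \<in> {1..N}" and "0 \<le> x"
  shows "miner_payoff R \<gamma> (c i) (total_hash N h - h i) x
           \<le> miner_payoff R \<gamma> (c i) (total_hash N h - h i) (h i)"
proof -
  have "payoff R \<gamma> c N (h(i := x)) i \<le> payoff R \<gamma> c N h i"
    using equilibrium assms by (simp add: is_equilibrium_def)
  then show ?thesis
    by (simp only: payoff_fun_upd[OF assms(1)] payoff_eq_miner_payoff[OF assms(1), of R \<gamma> c h])
qed

lemma others_hash_pos:
  assumes "i \<in> {1..N}"
  shows "0 < total_hash N h - h i"
proof -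
  have "0 \<le> total_hash N h - h i"
    using member_le_sum[OF assms, of h] hash_nonneg by (simp add: total_hash_def)
  then show ?thesis
    using best_response_others_pos[OF reward_pos cost_pos[OF assms] gamma_nonneg
          hash_nonneg[OF assms] best_response[OF assms]] by blast
qed

lemma total_hash_pos: "0 < total_hash N h"
  using others_hash_pos[of 1] hash_nonneg[of 1] miners_exist by simp

lemma active_hash_eq:
  assumes "i \<in> {1..N}" and "0 < h i"
  shows "h i * (\<gamma> + R / (total_hash N h)^2) = R / total_hash N h - c i"
  using best_response_interior[OF reward_pos cost_pos[OF assms(1)] gamma_nonneg
      hash_nonneg[OF assms(1)] best_response[OF assms(1)] others_hash_pos[OF assms(1)] assms(2)]
  by simp

lemma inactive_cost_ge:
  assumes "i \<in> {1..N}" and "h i = 0"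
  shows "R / total_hash N h \<le> c i"
  using best_response_corner[OF reward_pos cost_pos[OF assms(1)] gamma_nonneg
      hash_nonneg[OF assms(1)] best_response[OF assms(1)] others_hash_pos[OF assms(1)] assms(2)]
    assms(2) by simp

lemma hash_antitone:
  assumes i: "i \<in> {1..N}" and j: "j \<in> {1..N}" and "c i \<le> c j"
  shows "h j \<le> h i"
proof (cases "0 < h j")
  case True
  have K_pos: "0 < \<gamma> + R / (total_hash N h)^2"
    using gamma_nonneg reward_pos total_hash_pos by (simp add: add_nonneg_pos)
  with True have "0 < h j * (\<gamma> + R / (total_hash N h)^2)"
    by simp
  with active_hash_eq[OF j True] have "c j < R / total_hash N h"
    by simp
  with inactive_cost_ge[OF i] hash_nonneg[OF i] \<open>c i \<le> c j\<close> have "0 < h i"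
    by force
  with active_hash_eq[OF i] active_hash_eq[OF j True] \<open>c i \<le> c j\<close>
  have "h j * (\<gamma> + R / (total_hash N h)^2) \<le> h i * (\<gamma> + R / (total_hash N h)^2)"
    by simp
  then show ?thesis
    using K_pos by (rule mult_right_le_imp_le)
next
  case False
  then show ?thesis using hash_nonneg[OF i] by simp
qed

lemma payoff_coeff_pos: "0 < \<gamma> / 2 + R / (total_hash N h)^2"
  using gamma_nonneg reward_pos total_hash_pos by (simp add: add_nonneg_pos)

lemma payoff_eq_square:
  assumes "i \<in> {1..N}"
  shows "payoff R \<gamma> c N h i = (\<gamma> / 2 + R / (total_hash N h)^2) * (h i)^2"
proof (cases "h i = 0")
  case True
  then show ?thesis using total_hash_pos by (simp add: payoff_def)
next
  case False
  with hash_nonneg[OF assms] have "0 < h i" by simp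
  have "payoff R \<gamma> c N h i = h i * (R / total_hash N h - c i) - \<gamma> / 2 * (h i)^2"
    using total_hash_pos by (simp add: payoff_def algebra_simps)
  also have "\<dots> = h i * (h i * (\<gamma> + R / (total_hash N h)^2)) - \<gamma> / 2 * (h i)^2"
    using active_hash_eq[OF assms \<open>0 < h i\<close>] by simp
  also have "\<dots> = (\<gamma> / 2 + R / (total_hash N h)^2) * (h i)^2"
    by (simp add: algebra_simps power2_eq_square)
  finally show ?thesis .
qed

lemma payoff_pos_iff:
  assumes "i \<in> {1..N}"
  shows "0 < payoff R \<gamma> c N h i \<longleftrightarrow> 0 < h i"
  using payoff_eq_square[OF assms] payoff_coeff_pos hash_nonneg[OF assms]
  by (auto simp: zero_less_mult_iff)

lemma payoff_eq_0_iff: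
  assumes "i \<in> {1..N}"
  shows "payoff R \<gamma> c N h i = 0 \<longleftrightarrow> h i = 0"
  using payoff_eq_square[OF assms] payoff_coeff_pos by simp

lemma payoff_antitone:
  assumes "i \<in> {1..N}" and "j \<in> {1..N}" and "c i \<le> c j"
  shows "payoff R \<gamma> c N h j \<le> payoff R \<gamma> c N h i"
proof -
  have "(h j)^2 \<le> (h i)^2"
    using hash_antitone[OF assms] hash_nonneg[OF assms(2)] by (rule power_mono)
  then show ?thesis
    using payoff_eq_square assms payoff_coeff_pos by (simp add: mult_left_mono)
qed

lemma payoff_per_hash:
  assumes "i \<in> {1..N}" and "0 < h i"
  shows "payoff R \<gamma> c N h i / h i = (\<gamma> / 2 + R / (total_hash N h)^2) * h i"
  using payoff_eq_square[OF assms(1)] assms(2) by (simp add: power2_eq_square)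

lemma payoff_per_hash_antitone:
  assumes "i \<in> {1..N}" and "j \<in> {1..N}" and "c i \<le> c j" and "0 < h j"
  shows "payoff R \<gamma> c N h j / h j \<le> payoff R \<gamma> c N h i / h i"
proof -
  have "h j \<le> h i" using hash_antitone[OF assms(1-3)] .
  with \<open>0 < h j\<close> show ?thesis
    using payoff_per_hash assms(1,2) payoff_coeff_pos by (simp add: mult_left_mono)
qed

end

theorem proposition4p3:
  fixes N :: nat and c :: "nat \<Rightarrow> real" and R \<gamma> :: real and h :: "nat \<Rightarrow> real"
  assumes N2: "2 \<le> N"
    and cpos: "\<forall>i\<in>{1..N}. 0 < c i"
    and cmono: "\<forall>i. 1 \<le> i \<and> i < N \<longrightarrow> c i \<le> c (i + 1)"
    and Rpos: "0 < R"
    and gam: "0 \<le> \<gamma>"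
    and eq: "is_equilibrium R \<gamma> c N h"
  shows "(\<forall>i. 1 \<le> i \<and> i < N \<longrightarrow> payoff R \<gamma> c N h (i + 1) \<le> payoff R \<gamma> c N h i)
       \<and> (\<forall>i. 1 \<le> i \<and> i \<le> num_active N h \<longrightarrow> 0 < payoff R \<gamma> c N h i)
       \<and> (\<forall>i. num_active N h < i \<and> i \<le> N \<longrightarrow> payoff R \<gamma> c N h i = 0)
       \<and> (\<forall>i. 1 \<le> i \<and> i < num_active N h \<longrightarrow>
            payoff R \<gamma> c N h (i + 1) / h (i + 1) \<le> payoff R \<gamma> c N h i / h i)"
proof -
  interpret mining_equilibrium N c R \<gamma> h
    using N2 cpos Rpos gam eq by unfold_locales auto
  have c_mono: "c i \<le> c j" if "1 \<le> i" "i \<le> j" "j \<le> N" for i j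
    using lift_Suc_mono_le_ivl[of "{1..<N}" c i j] cmono that by auto
  have active: "{i\<in>{1..N}. 0 < h i} = {1..num_active N h}"
    unfolding num_active_def
    by (rule positive_set_eq_initial_segment) (simp add: hash_antitone c_mono)
  show ?thesis
  proof (intro conjI allI impI)
    fix i assume "1 \<le> i \<and> i < N"
    then show "payoff R \<gamma> c N h (i + 1) \<le> payoff R \<gamma> c N h i"
      by (intro payoff_antitone c_mono) auto
  next
    fix i assume "1 \<le> i \<and> i \<le> num_active N h"
    then have "i \<in> {i\<in>{1..N}. 0 < h i}"
      unfolding active by simp
    then show "0 < payoff R \<gamma> c N h i"
      by (simp add: payoff_pos_iff)
  next
    fix i assume "num_active N h < i \<and> i \<le> N"
    then have "i \<in> {1..N}" and "i \<notin> {i\<in>{1..N}. 0 < h i}"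
      unfolding active by auto
    then show "payoff R \<gamma> c N h i = 0"
      using hash_nonneg payoff_eq_0_iff by fastforce
  next
    fix i assume "1 \<le> i \<and> i < num_active N h"
    then have "i \<in> {i\<in>{1..N}. 0 < h i}" and "i + 1 \<in> {i\<in>{1..N}. 0 < h i}"
      unfolding active by auto
    then show "payoff R \<gamma> c N h (i + 1) / h (i + 1) \<le> payoff R \<gamma> c N h i / h i"
      by (intro payoff_per_hash_antitone c_mono) auto
  qed
qed

end
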